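(* For any odd prime $p$ and any non-negative integer $k$, \[ C^{(-k-1)}_{p-1}\equiv 1\pmod p. \]
   Context: For any integer $k$, let $\mathrm{Li}_k(t)=\sum_{n=1}^{\infty} t^n/n^k$. The poly-Bernoulli numbers of type $C$, $C^{(k)}_n$ ($n\ge0$), are defined by $\frac{\mathrm{Li}_k(1-e^{-t})}{e^{t}-1}=\sum_{n=0}^{\infty}C^{(k)}_n\frac{t^n}{n!}$. For negative upper index these are integers. *)

theory Defs
  imports "HOL-Computational_Algebra.Formal_Power_Series" "HOL-Number_Theory.Number_Theory"
begin

text \<open>Formal power series of Li_{-m}(x) = sum_{n>=1} n^m x^n, for m a natural number
  (so the upper index of Li is the non-positive integer -m).\<close>
definition Li_neg_fps :: "nat \<Rightarrow> rat fps" where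
  "Li_neg_fps m = Abs_fps (\<lambda>n. if n = 0 then 0 else (of_nat n) ^ m)"

definition polyC_neg :: "nat \<Rightarrow> nat \<Rightarrow> rat" where
  "polyC_neg m n =
     fact n * fps_nth (fps_compose (Li_neg_fps m) (1 - fps_exp (-1)) / (fps_exp 1 - 1)) n"

end

theory Submission
  imports Defs
begin

(* With x = 1 - e^{-t} one has dx/dt = e^{-t} and e^t - 1 = x e^t, and Li_{-m-1}(x) = x Li_{-m}'(x);
   hence the generating function of C^{(-m-1)}_n is d/dt Li_{-m}(1 - e^{-t}), and expanding
   (1 - e^{-t})^i binomially gives
     C^{(-m-1)}_n = sum_{i=1}^{n+1} i^m sum_{j<=i} (i choose j) (-1)^j (-j)^{n+1}.
   For n + 1 = p prime, Fermat replaces (-j)^p by -j modulo p, and the alternating sum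
   sum_j (i choose j) (-1)^j j vanishes unless i = 1; only the term i = 1 survives, and it is 1. *)

unbundle fps_syntax

lemma Li_neg_fps_Suc: "Li_neg_fps (Suc m) = fps_X * fps_deriv (Li_neg_fps m)"
  by (rule fps_ext) (auto simp: Li_neg_fps_def)

lemma fps_exp_neg_mult_exp_minus_one:
  "fps_exp (-1) * (fps_exp 1 - 1) = 1 - fps_exp (-1 :: 'a :: field_char_0)"
proof -
  have "fps_exp (1::'a) * fps_exp (-1) = 1"
    by (simp flip: fps_exp_add_mult)
  then show ?thesis by (simp add: algebra_simps)
qed

lemma polyC_neg_Suc_gf_eq_deriv:
  "(Li_neg_fps (Suc m) oo (1 - fps_exp (-1))) / (fps_exp 1 - 1)
     = fps_deriv (Li_neg_fps m oo (1 - fps_exp (-1)))"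
proof -
  let ?x = "1 - fps_exp (-1) :: rat fps"
  have x0: "?x $ 0 = 0" by simp
  have "Li_neg_fps (Suc m) oo ?x = ?x * (fps_deriv (Li_neg_fps m) oo ?x)"
    by (simp add: Li_neg_fps_Suc fps_compose_mult_distrib[OF x0])
  also have "\<dots> = fps_exp (-1) * (fps_exp 1 - 1) * (fps_deriv (Li_neg_fps m) oo ?x)"
    by (simp only: fps_exp_neg_mult_exp_minus_one)
  also have "\<dots> = fps_deriv (Li_neg_fps m oo ?x) * (fps_exp 1 - 1)"
    by (simp add: fps_compose_deriv[OF x0] mult_ac flip: fps_const_neg)
  finally have "Li_neg_fps (Suc m) oo ?x = fps_deriv (Li_neg_fps m oo ?x) * (fps_exp 1 - 1)" .
  moreover have "fps_exp 1 - 1 \<noteq> (0 :: rat fps)"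
  proof
    assume "fps_exp 1 - 1 = (0 :: rat fps)"
    then have "(fps_exp 1 - 1 :: rat fps) $ 1 = 0" by simp
    then show False by simp
  qed
  ultimately show ?thesis by simp
qed

definition alternating_power_sum :: "nat \<Rightarrow> nat \<Rightarrow> int" where
  "alternating_power_sum n i = (\<Sum>j\<le>i. int (i choose j) * (-1) ^ j * (- int j) ^ n)"

lemma fact_mult_nth_one_minus_exp_power:
  "fact n * ((1 - fps_exp (-1)) ^ i) $ n
     = (of_int (alternating_power_sum n i) :: 'a :: field_char_0)"
proof -
  have neg_exp_power:
      "(- fps_exp (-1 :: 'a)) ^ j = fps_const ((-1) ^ j) * fps_exp (of_nat j * -1)" for j
    by (subst power_minus)
      (simp only: fps_exp_power_mult fps_const_neg fps_const_power flip: fps_const_1_eq_1)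
  have "(1 - fps_exp (-1 :: 'a)) ^ i = (- fps_exp (-1) + 1) ^ i" by simp
  also have "\<dots> = (\<Sum>j\<le>i. of_nat (i choose j) * (- fps_exp (-1)) ^ j * 1 ^ (i - j))"
    by (rule binomial_ring)
  also have "\<dots> = (\<Sum>j\<le>i. fps_const (of_nat (i choose j) * (-1) ^ j) * fps_exp (of_nat j * -1))"
    by (simp only: neg_exp_power power_one mult_1_right fps_const_mult
        flip: fps_of_nat mult.assoc)
  finally have "((1 - fps_exp (-1 :: 'a)) ^ i) $ n
      = (\<Sum>j\<le>i. of_nat (i choose j) * (-1) ^ j * ((of_nat j * -1) ^ n / fact n))"
    by (simp only: fps_sum_nth fps_mult_left_const_nth fps_exp_nth of_nat_fact mult.assoc)
  then show ?thesis
    by (simp add: alternating_power_sum_def sum_distrib_left)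
qed

lemma polyC_neg_Suc_eq_sum:
  "polyC_neg (Suc m) n = of_int (\<Sum>i=1..Suc n. int i ^ m * alternating_power_sum (Suc n) i)"
proof -
  let ?x = "1 - fps_exp (-1) :: rat fps"
  have "polyC_neg (Suc m) n = fact (Suc n) * (Li_neg_fps m oo ?x) $ Suc n"
    by (simp add: polyC_neg_def polyC_neg_Suc_gf_eq_deriv algebra_simps)
  also have "\<dots> = (\<Sum>i=0..Suc n. Li_neg_fps m $ i * (fact (Suc n) * (?x ^ i) $ Suc n))"
    by (simp only: fps_compose_nth sum_distrib_left mult.left_commute)
  also have "\<dots> = (\<Sum>i=0..Suc n. Li_neg_fps m $ i * of_int (alternating_power_sum (Suc n) i))"
    by (simp only: fact_mult_nth_one_minus_exp_power)
  also have "\<dots> = (\<Sum>i=1..Suc n. of_int (int i ^ m * alternating_power_sum (Suc n) i))"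
    by (simp add: sum.atLeast_Suc_atMost Li_neg_fps_def)
  finally show ?thesis by (simp only: of_int_sum)
qed

lemma fermat_little_nat:
  assumes "prime p"
  shows "[a ^ p = a] (mod p)"
proof (cases "p dvd a")
  case True
  moreover have "a dvd a ^ p"
    using assms prime_gt_0_nat by simp
  ultimately have "p dvd a ^ p"
    by (rule dvd_trans)
  with True show ?thesis
    by (simp add: cong_def dvd_eq_mod_eq_0)
next
  case False
  have "[a * a ^ (p - 1) = a * 1] (mod p)"
    using fermat_theorem[OF assms False] by (rule cong_scalar_left)
  moreover have "a * a ^ (p - 1) = a ^ p"
    using assms prime_gt_0_nat by (metis Suc_diff_1 power_Suc)
  ultimately show ?thesis by simp
qed

lemma fermat_little_int:
  assumes "prime p"
  shows "[x ^ p = x] (mod int p)"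
proof -
  obtain a where a: "x mod int p = int a"
    using assms prime_gt_0_nat by (metis int_nat_eq pos_mod_sign of_nat_0_less_iff)
  have "[x ^ p = (x mod int p) ^ p] (mod int p)"
    by (intro cong_pow) (simp add: cong_def)
  also have "(x mod int p) ^ p = int (a ^ p)"
    by (simp add: a)
  also have "[int (a ^ p) = int a] (mod int p)"
    using fermat_little_nat[OF assms] by (metis cong_int_iff of_nat_power)
  also have "[int a = x] (mod int p)"
    by (simp flip: a add: cong_def)
  finally show ?thesis .
qed

lemma alternating_power_sum_prime_cong:
  assumes "prime p"
  shows "[alternating_power_sum p i = of_bool (i = 1)] (mod int p)"
proof -
  have "[alternating_power_sum p i
        = (\<Sum>j\<le>i. int (i choose j) * (-1) ^ j * (- int j))] (mod int p)"
    unfolding alternating_power_sum_def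
    by (intro cong_sum cong_mult cong_refl fermat_little_int assms)
  also have "(\<Sum>j\<le>i. int (i choose j) * (-1) ^ j * (- int j)) = of_bool (i = 1)"
  proof (cases "i = 1")
    case False
    then show ?thesis
      using choose_alternating_linear_sum[OF False, where 'a=int]
      by (simp add: sum_negf mult_ac)
  qed simp
  finally show ?thesis .
qed

lemma polyC_neg_sum_prime_cong:
  assumes "prime p"
  shows "[(\<Sum>i=1..p. int i ^ m * alternating_power_sum p i) = 1] (mod int p)"
proof -
  have "[(\<Sum>i=1..p. int i ^ m * alternating_power_sum p i)
        = (\<Sum>i=1..p. int i ^ m * of_bool (i = 1))] (mod int p)"
    by (intro cong_sum cong_mult cong_refl alternating_power_sum_prime_cong assms)
  also have "(\<Sum>i=1..p. int i ^ m * of_bool (i = 1)) = (\<Sum>i=1..p. of_bool (i = 1))"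
    by (intro sum.cong) auto
  also have "\<dots> = 1"
    using assms prime_ge_1_nat by simp
  finally show ?thesis .
qed

theorem theorem3p3:
  fixes p k :: nat
  assumes "prime p" and "odd p"
  shows "\<exists>c::int. polyC_neg (k + 1) (p - 1) = of_int c \<and> [c = 1] (mod int p)"
proof -
  have "Suc (p - 1) = p"
    using assms(1) prime_gt_0_nat by simp
  then have "polyC_neg (k + 1) (p - 1)
      = of_int (\<Sum>i=1..p. int i ^ k * alternating_power_sum p i)"
    using polyC_neg_Suc_eq_sum[of k "p - 1"] by simp
  with polyC_neg_sum_prime_cong[OF assms(1)] show ?thesis
    by blast
qed

end
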